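(* Let $V(z)=\sum_{j=1}^{2d}v_jz^j$ with $v_{2d}>0$, $\tilde v_2=Nv_2$, and $Z_N=\int_{\mathbb R^N}\prod_{1\le j<k\le N}(z_j-z_k)^2e^{-N\sum_jV(z_j)}dz_1\cdots dz_N$. Then $$\frac{\partial^2\ln Z_N}{\partial\tilde v_2^2}=\gamma_N^2\big(\gamma_{N-1}^2+\gamma_{N+1}^2+\beta_N^2+2\beta_N\beta_{N-1}+\beta_{N-1}^2\big).$$
   Context: $\gamma_n,\beta_n$ are the recurrence coefficients of the monic orthogonal polynomials $P_n$ with respect to $e^{-NV(z)}$ on $\mathbb R$: $zP_n=P_{n+1}+\beta_nP_n+\gamma_n^2P_{n-1}$, $\gamma_n=\sqrt{h_n/h_{n-1}}>0$ with $h_n=\int P_n^2e^{-NV}dz$, $\gamma_0=0$. *)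

theory Defs
  imports "HOL-Probability.Probability" "HOL-Computational_Algebra.Polynomial"
begin

definition Vpot :: "nat \<Rightarrow> (nat \<Rightarrow> real) \<Rightarrow> real \<Rightarrow> real" where
  "Vpot d v z = (\<Sum>j=1..2*d. v j * z ^ j)"

definition opweight :: "nat \<Rightarrow> nat \<Rightarrow> (nat \<Rightarrow> real) \<Rightarrow> real \<Rightarrow> real" where
  "opweight d N v x = exp (- real N * Vpot d v x)"

definition is_monic_OP :: "(real \<Rightarrow> real) \<Rightarrow> nat \<Rightarrow> real poly \<Rightarrow> bool" where
  "is_monic_OP w n p \<longleftrightarrow> degree p = n \<and> lead_coeff p = 1 \<and>
     (\<forall>k<n. integrable lborel (\<lambda>x. poly p x * x ^ k * w x) \<and>
            integral\<^sup>L lborel (\<lambda>x. poly p x * x ^ k * w x) = 0)"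

definition mOP :: "(real \<Rightarrow> real) \<Rightarrow> nat \<Rightarrow> real poly" where
  "mOP w n = (THE p. is_monic_OP w n p)"

definition hnorm :: "(real \<Rightarrow> real) \<Rightarrow> nat \<Rightarrow> real" where
  "hnorm w n = integral\<^sup>L lborel (\<lambda>x. (poly (mOP w n) x)\<^sup>2 * w x)"

definition rc_gamma :: "(real \<Rightarrow> real) \<Rightarrow> nat \<Rightarrow> real" where
  "rc_gamma w n = (if n = 0 then 0 else sqrt (hnorm w n / hnorm w (n - 1)))"

definition rc_beta :: "(real \<Rightarrow> real) \<Rightarrow> nat \<Rightarrow> real" where
  "rc_beta w n = (THE b. \<exists>c. [:0, 1:] * mOP w n =
      mOP w (Suc n) + smult b (mOP w n) + smult c (if n = 0 then 0 else mOP w (n - 1)))"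

definition partition_Z :: "nat \<Rightarrow> nat \<Rightarrow> (nat \<Rightarrow> real) \<Rightarrow> real" where
  "partition_Z d N v = integral\<^sup>L (PiM {..<N} (\<lambda>_. lborel))
     (\<lambda>z. (\<Prod>j<N. \<Prod>k\<in>{Suc j..<N}. (z j - z k)\<^sup>2) *
          exp (- real N * (\<Sum>j<N. Vpot d v (z j))))"

end

(* Heine's formula gives Z_N = N! h_0 ... h_{N-1}. With t = N v_2 the weight is w(x) e^{-t x^2},
   so d/dt of any integral against it inserts a factor -x^2. Since d/dt P_n has degree < n,
   orthogonality gives h_n' = -<x^2 P_n, P_n>, and differentiating once more expresses
   (ln h_n)'' through the entries <x^2 P_n, P_k>, which vanish for |n - k| > 2. Summed over
   n < N these terms telescope, leaving only the entries coupling P_{N-1}, P_N to P_{N+1},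
   which the three-term recurrence evaluates in terms of beta and gamma. *)

theory Submission
  imports Defs "Jordan_Normal_Form.Determinant"
begin

text \<open>Unlike \<open>degree p < m\<close>, this also holds for \<open>p = 0\<close> and \<open>m = 0\<close>.\<close>
definition deg_lt :: "real poly \<Rightarrow> nat \<Rightarrow> bool" where
  "deg_lt p m \<longleftrightarrow> (\<forall>a\<ge>m. coeff p a = 0)"

lemma deg_lt_mono: "deg_lt p m \<Longrightarrow> m \<le> m' \<Longrightarrow> deg_lt p m'"
  unfolding deg_lt_def by auto

lemma deg_lt_pCons: "deg_lt p m \<Longrightarrow> deg_lt (pCons 0 p) (Suc m)"
  unfolding deg_lt_def by (auto simp: coeff_pCons split: nat.splits)

lemma deg_lt_diff:
  assumes "deg_lt p (Suc n)" and "deg_lt q (Suc n)" and "coeff p n = coeff q n"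
  shows "deg_lt (p - q) n"
  using assms unfolding deg_lt_def by (metis coeff_diff diff_self le_eq_less_or_eq less_eq_Suc_le)

lemma poly_eq_sum_deg_lt:
  assumes "deg_lt p n"
  shows "poly p x = (\<Sum>k<n. coeff p k * x ^ k)"
proof -
  have "poly p x = (\<Sum>k\<le>degree p. coeff p k * x ^ k)" by (rule poly_altdef)
  also have "\<dots> = (\<Sum>k<n. coeff p k * x ^ k)"
  proof (cases "p = 0")
    case False
    then have "degree p < n" using assms unfolding deg_lt_def by (meson leading_coeff_0_iff not_le)
    then show ?thesis by (intro sum.mono_neutral_left) (auto simp: coeff_eq_0)
  qed simp
  finally show ?thesis .
qed

definition x2_times :: "real poly \<Rightarrow> real poly" where
  "x2_times p = pCons 0 (pCons 0 p)"

lemma poly_x2_times: "poly (x2_times p) x = x\<^sup>2 * poly p x"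
  unfolding x2_times_def by (simp add: power2_eq_square)

lemma deg_lt_x2_times: "deg_lt p m \<Longrightarrow> deg_lt (x2_times p) (Suc (Suc m))"
  unfolding x2_times_def by (intro deg_lt_pCons)

text \<open>Stieltjes' procedure: the monic orthogonal polynomials of a form \<open>B\<close>, generated by
  the three-term recurrence whose coefficients are computed from \<open>B\<close> itself.\<close>
fun stieltjes_OP :: "(real poly \<Rightarrow> real poly \<Rightarrow> real) \<Rightarrow> nat \<Rightarrow> real poly" where
  "stieltjes_OP B 0 = 1"
| "stieltjes_OP B (Suc 0) = [:0, 1:] - Polynomial.smult (B [:0, 1:] 1 / B 1 1) 1"
| "stieltjes_OP B (Suc (Suc n)) = pCons 0 (stieltjes_OP B (Suc n))
     - Polynomial.smult (B (pCons 0 (stieltjes_OP B (Suc n))) (stieltjes_OP B (Suc n))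
              / B (stieltjes_OP B (Suc n)) (stieltjes_OP B (Suc n))) (stieltjes_OP B (Suc n))
     - Polynomial.smult (B (stieltjes_OP B (Suc n)) (stieltjes_OP B (Suc n))
              / B (stieltjes_OP B n) (stieltjes_OP B n)) (stieltjes_OP B n)"

definition op_norm :: "(real poly \<Rightarrow> real poly \<Rightarrow> real) \<Rightarrow> nat \<Rightarrow> real" where
  "op_norm B n = B (stieltjes_OP B n) (stieltjes_OP B n)"

definition op_beta :: "(real poly \<Rightarrow> real poly \<Rightarrow> real) \<Rightarrow> nat \<Rightarrow> real" where
  "op_beta B n = B (pCons 0 (stieltjes_OP B n)) (stieltjes_OP B n) / op_norm B n"

definition op_gamma_sq :: "(real poly \<Rightarrow> real poly \<Rightarrow> real) \<Rightarrow> nat \<Rightarrow> real" where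
  "op_gamma_sq B n = (if n = 0 then 0 else op_norm B n / op_norm B (n - 1))"

lemma stieltjes_OP_Suc:
  "stieltjes_OP B (Suc n) = pCons 0 (stieltjes_OP B n) - Polynomial.smult (op_beta B n) (stieltjes_OP B n)
     - Polynomial.smult (op_gamma_sq B n) (if n = 0 then 0 else stieltjes_OP B (n - 1))"
  by (cases n) (simp_all add: op_beta_def op_gamma_sq_def op_norm_def one_pCons)

declare stieltjes_OP.simps(2,3) [simp del]

lemma stieltjes_OP_coeffs:
  "coeff (stieltjes_OP B n) n = 1 \<and> deg_lt (stieltjes_OP B n) (Suc n)"
proof (induction n rule: less_induct)
  case (less n)
  show ?case
  proof (cases n)
    case (Suc m)
    have "deg_lt (if m = 0 then 0 else stieltjes_OP B (m - 1)) m"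
      using less[of "m - 1"] Suc by (auto simp: deg_lt_def)
    then show ?thesis
      using less[of m] unfolding Suc stieltjes_OP_Suc
      by (auto simp: deg_lt_def coeff_pCons split: nat.splits)
  qed (simp add: deg_lt_def)
qed

lemma coeff_stieltjes_OP_self: "coeff (stieltjes_OP B n) n = 1"
  using stieltjes_OP_coeffs by blast

lemma deg_lt_stieltjes_OP_iff: "deg_lt (stieltjes_OP B k) m \<longleftrightarrow> k < m"
  using stieltjes_OP_coeffs[of B k] unfolding deg_lt_def
  by (metis Suc_leI linorder_not_le order.trans zero_neq_one)

lemma degree_stieltjes_OP: "degree (stieltjes_OP B n) = n"
proof (rule antisym)
  show "degree (stieltjes_OP B n) \<le> n"
    using deg_lt_stieltjes_OP_iff[of B n "Suc n"] unfolding deg_lt_def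
    by (intro degree_le) (simp add: Suc_le_eq)
  show "n \<le> degree (stieltjes_OP B n)" by (simp add: coeff_stieltjes_OP_self le_degree)
qed

lemma stieltjes_OP_nonzero: "stieltjes_OP B n \<noteq> 0"
  using coeff_stieltjes_OP_self[of B n] by auto

text \<open>Multiplication by \<open>x\<close> is self-adjoint, so \<open>B p q\<close> depends only on the product \<open>p q\<close>.\<close>
locale hankel_form =
  fixes B :: "real poly \<Rightarrow> real poly \<Rightarrow> real"
  assumes B_add: "B (p + q) r = B p r + B q r"
    and B_smult: "B (Polynomial.smult a p) r = a * B p r"
    and B_sym: "B p q = B q p"
    and B_pos: "p \<noteq> 0 \<Longrightarrow> B p p > 0"
    and B_pCons_0: "B (pCons 0 p) q = B p (pCons 0 q)"
begin

abbreviation "P \<equiv> stieltjes_OP B"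
abbreviation "h \<equiv> op_norm B"
abbreviation "b \<equiv> op_beta B"
abbreviation "c \<equiv> op_gamma_sq B"

lemma B_0_left [simp]: "B 0 r = 0"
  using B_smult[of 0 0 r] by simp

lemma B_add_right: "B r (p + q) = B r p + B r q"
  using B_add B_sym by metis

lemma B_smult_right: "B r (Polynomial.smult a p) = a * B r p"
  using B_smult B_sym by metis

lemma B_diff: "B (p - q) r = B p r - B q r"
  using B_add[of "p - q" q r] by simp

lemma B_sum: "B (\<Sum>k\<in>S. f k) r = (\<Sum>k\<in>S. B (f k) r)"
  by (induction S rule: infinite_finite_induct) (auto simp: B_add)

lemma B_x2_times: "B (x2_times p) q = B p (x2_times q)"
  unfolding x2_times_def by (simp add: B_pCons_0)

lemma op_norm_pos: "h n > 0"
  unfolding op_norm_def using B_pos stieltjes_OP_nonzero by blast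

lemma deg_lt_in_span: "deg_lt p m \<Longrightarrow> \<exists>a. p = (\<Sum>k<m. Polynomial.smult (a k) (P k))"
proof (induction m arbitrary: p)
  case 0
  then have "p = 0" unfolding deg_lt_def by (simp add: poly_eq_iff)
  then show ?case by simp
next
  case (Suc m)
  have "deg_lt (p - Polynomial.smult (coeff p m) (P m)) m"
    using Suc.prems deg_lt_stieltjes_OP_iff[of B m "Suc m"]
    by (intro deg_lt_diff) (auto simp: coeff_stieltjes_OP_self deg_lt_def)
  then obtain a where "p - Polynomial.smult (coeff p m) (P m) = (\<Sum>k<m. Polynomial.smult (a k) (P k))"
    using Suc.IH by blast
  then have "p = (\<Sum>k<Suc m. Polynomial.smult ((a(m := coeff p m)) k) (P k))"
    by (simp add: algebra_simps)
  then show ?case by blast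
qed

lemma orthogonal_if_orthogonal_below:
  assumes "\<And>k. k < n \<Longrightarrow> B (P n) (P k) = 0" and "deg_lt p n"
  shows "B p (P n) = 0"
proof -
  obtain a where a: "p = (\<Sum>k<n. Polynomial.smult (a k) (P k))" using deg_lt_in_span assms(2) by blast
  show ?thesis using assms(1) unfolding a B_sum B_smult by (simp add: B_sym)
qed

lemma B_x_OP_below:
  assumes orth: "\<And>j k. j \<le> m \<Longrightarrow> k < j \<Longrightarrow> B (P j) (P k) = 0" and "k < m"
  shows "B (pCons 0 (P m)) (P k) = (if Suc k = m then h m else 0)"
proof -
  have below: "B p (P m) = 0" if "deg_lt p m" for p
    using orthogonal_if_orthogonal_below[OF orth that] by simp
  have "B (pCons 0 (P m)) (P k) = B (pCons 0 (P k) - P (Suc k)) (P m) + B (P (Suc k)) (P m)"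
    by (metis B_pCons_0 B_sym B_add diff_add_cancel)
  also have "B (pCons 0 (P k) - P (Suc k)) (P m) = 0"
    using \<open>k < m\<close> deg_lt_stieltjes_OP_iff[of B]
    by (intro below deg_lt_mono[OF deg_lt_diff[of _ "Suc k"]])
      (auto intro: deg_lt_pCons simp: coeff_stieltjes_OP_self)
  also have "B (P (Suc k)) (P m) = (if Suc k = m then h m else 0)"
    using \<open>k < m\<close> below[of "P (Suc k)"] deg_lt_stieltjes_OP_iff[of B]
    by (auto simp: op_norm_def)
  finally show ?thesis by simp
qed

lemma OP_orthogonal: "k < n \<Longrightarrow> B (P n) (P k) = 0"
proof (induction n arbitrary: k rule: less_induct)
  case (less n)
  then obtain m where n: "n = Suc m" by (cases n) auto
  have orth: "B (P j) (P i) = 0" if "j \<le> m" "i < j" for i j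
    using less.IH that n by simp
  have prev: "B (P (m - 1)) (P k) = (if k = m - 1 then h (m - 1) else 0)" if "m > 0" "k \<le> m"
  proof (cases k "m - 1" rule: linorder_cases)
    case greater
    then show ?thesis using orth[of k "m - 1"] that B_sym[of "P k" "P (m - 1)"] by simp
  qed (use that orth[of "m - 1" k] in \<open>simp_all add: op_norm_def\<close>)
  have "k = m \<or> k < m" using less.prems n by linarith
  then show ?case
  proof
    assume "k = m"
    then show ?thesis unfolding n stieltjes_OP_Suc
      using op_norm_pos[of m] prev orth[of m "m - 1"]
      by (auto simp: B_diff B_smult op_beta_def op_norm_def)
  next
    assume "k < m"
    then show ?thesis unfolding n stieltjes_OP_Suc
      using op_norm_pos[of "m - 1"] prev orth[of m k] B_x_OP_below[OF orth \<open>k < m\<close>]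
      by (auto simp: B_diff B_smult op_gamma_sq_def)
  qed
qed

lemma B_deg_lt_OP: "deg_lt p n \<Longrightarrow> B p (P n) = 0"
  using orthogonal_if_orthogonal_below OP_orthogonal by blast

lemma B_OP_deg_lt: "deg_lt p n \<Longrightarrow> B (P n) p = 0"
  using B_deg_lt_OP B_sym by metis

lemma OP_expansion:
  assumes "deg_lt p m"
  shows "p = (\<Sum>k<m. Polynomial.smult (B p (P k) / h k) (P k))"
proof -
  obtain a where a: "p = (\<Sum>k<m. Polynomial.smult (a k) (P k))" using deg_lt_in_span assms by blast
  have "B p (P j) = a j * h j" if "j < m" for j
  proof -
    have "B p (P j) = (\<Sum>k<m. a k * B (P k) (P j))" by (subst a) (simp add: B_sum B_smult)
    also have "\<dots> = (\<Sum>k\<in>{j}. a k * B (P k) (P j))"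
      using that OP_orthogonal B_sym
      by (intro sum.mono_neutral_right) (auto, metis linorder_neqE_nat mult_eq_0_iff)
    finally show ?thesis by (simp add: op_norm_def)
  qed
  then have "a k = B p (P k) / h k" if "k < m" for k
    using op_norm_pos[of k] that by simp
  then show ?thesis by (subst a) (auto intro: sum.cong)
qed

lemma OP_parseval:
  assumes "deg_lt p m"
  shows "B p r = (\<Sum>k<m. B p (P k) * B r (P k) / h k)"
  by (subst OP_expansion[OF assms]) (simp add: B_sum B_smult B_sym[of "P _"])

lemma x_times_OP:
  "pCons 0 (P n) = P (Suc n) + Polynomial.smult (b n) (P n) + Polynomial.smult (c n) (if n = 0 then 0 else P (n - 1))"
  using stieltjes_OP_Suc[of B n] by (simp add: algebra_simps)

lemma op_gamma_sq_Suc: "c (Suc n) * h n = h (Suc n)"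
  unfolding op_gamma_sq_def using op_norm_pos[of n] by simp

lemma B_x_OP_OP: "B (pCons 0 (P n)) (P n) = b n * h n"
  unfolding op_beta_def using op_norm_pos[of n] by simp

lemma B_x_OP_OP_Suc: "B (pCons 0 (P n)) (P (Suc n)) = h (Suc n)"
proof -
  have "deg_lt (pCons 0 (P n) - P (Suc n)) (Suc n)"
    using deg_lt_stieltjes_OP_iff[of B]
    by (intro deg_lt_diff) (auto intro: deg_lt_pCons simp: coeff_stieltjes_OP_self)
  then have "B (pCons 0 (P n) - P (Suc n)) (P (Suc n)) = 0" by (rule B_deg_lt_OP)
  then show ?thesis by (simp add: B_diff op_norm_def)
qed

lemma B_x_OP_OP_far: "Suc n < k \<Longrightarrow> B (pCons 0 (P n)) (P k) = 0"
  using deg_lt_stieltjes_OP_iff[of B n "Suc n"]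
  by (intro B_deg_lt_OP deg_lt_mono[OF deg_lt_pCons]) auto

definition x2_entry :: "nat \<Rightarrow> nat \<Rightarrow> real" where
  "x2_entry n k = B (x2_times (P n)) (P k)"

lemma x2_entry_sym: "x2_entry n k = x2_entry k n"
  unfolding x2_entry_def by (metis B_x2_times B_sym)

lemma x2_entry_far: "k + 2 < n \<Longrightarrow> x2_entry n k = 0"
  unfolding x2_entry_def B_x2_times using deg_lt_stieltjes_OP_iff[of B k "Suc k"]
  by (intro B_OP_deg_lt deg_lt_mono[OF deg_lt_x2_times]) auto

lemma x2_entry_Suc_Suc: "x2_entry n (Suc (Suc n)) = h (Suc (Suc n))"
proof -
  have "deg_lt (x2_times (P n) - P (Suc (Suc n))) (Suc (Suc n))"
  proof (rule deg_lt_diff)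
    show "deg_lt (x2_times (P n)) (Suc (Suc (Suc n)))"
      by (rule deg_lt_x2_times) (simp add: deg_lt_stieltjes_OP_iff)
  qed (simp_all add: deg_lt_stieltjes_OP_iff x2_times_def coeff_stieltjes_OP_self)
  then have "B (x2_times (P n) - P (Suc (Suc n))) (P (Suc (Suc n))) = 0" by (rule B_deg_lt_OP)
  then show ?thesis unfolding x2_entry_def by (simp add: B_diff op_norm_def)
qed

lemma x2_entry_Suc: "x2_entry n (Suc n) = h (Suc n) * (b n + b (Suc n))"
proof -
  have "x2_entry n (Suc n) = B (pCons 0 (P n)) (pCons 0 (P (Suc n)))"
    unfolding x2_entry_def x2_times_def by (simp add: B_pCons_0)
  also have "\<dots> = B (pCons 0 (P n)) (P (Suc (Suc n))) + b (Suc n) * B (pCons 0 (P n)) (P (Suc n))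
       + c (Suc n) * B (pCons 0 (P n)) (P n)"
    by (subst x_times_OP[of "Suc n"]) (simp add: B_add_right B_smult_right)
  also have "\<dots> = h (Suc n) * (b n + b (Suc n))"
    using B_x_OP_OP_far[of n "Suc (Suc n)"] op_gamma_sq_Suc[of n]
    by (simp add: B_x_OP_OP_Suc B_x_OP_OP algebra_simps)
  finally show ?thesis .
qed

definition x2_weight :: "nat \<Rightarrow> nat \<Rightarrow> real" where
  "x2_weight n k = (x2_entry n k)\<^sup>2 / (h n * h k)"

lemma x2_weight_sym: "x2_weight n k = x2_weight k n"
  unfolding x2_weight_def using x2_entry_sym by (simp add: mult.commute)

text \<open>When the weight of \<open>B\<close> is tilted by \<open>e\<^sup>-\<^sup>t\<^sup>x\<^sup>2\<close>, this is \<open>(ln h\<^sub>n)''\<close> as a function of \<open>t\<close>.\<close>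
definition ln_norm_deriv2 :: "nat \<Rightarrow> real" where
  "ln_norm_deriv2 n = ((\<Sum>k<n+3. (x2_entry n k)\<^sup>2 / h k) - 2 * (\<Sum>k<n. (x2_entry n k)\<^sup>2 / h k)) / h n
     - (x2_entry n n)\<^sup>2 / (h n)\<^sup>2"

lemma sum_x2_entry_below:
  "(\<Sum>k<n. (x2_entry n k)\<^sup>2 / h k) = (if n \<ge> 1 then (x2_entry n (n-1))\<^sup>2 / h (n-1) else 0)
     + (if n \<ge> 2 then (x2_entry n (n-2))\<^sup>2 / h (n-2) else 0)"
proof -
  consider "n = 0" | "n = 1" | j where "n = Suc (Suc j)" by (metis One_nat_def not0_implies_Suc)
  then show ?thesis
  proof cases
    case 3
    then have "(\<Sum>k<j. (x2_entry n k)\<^sup>2 / h k) = 0" using x2_entry_far by (intro sum.neutral) auto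
    then show ?thesis using 3 by simp
  qed simp_all
qed

lemma ln_norm_deriv2_eq:
  "ln_norm_deriv2 n = x2_weight n (n+1) + x2_weight n (n+2)
     - (if n \<ge> 1 then x2_weight n (n-1) else 0) - (if n \<ge> 2 then x2_weight n (n-2) else 0)"
proof -
  have "(\<Sum>k<n+3. (x2_entry n k)\<^sup>2 / h k) = (\<Sum>k<n. (x2_entry n k)\<^sup>2 / h k) + (x2_entry n n)\<^sup>2 / h n
     + (x2_entry n (n+1))\<^sup>2 / h (n+1) + (x2_entry n (n+2))\<^sup>2 / h (n+2)"
    by (simp add: numeral_3_eq_3)
  then show ?thesis
    unfolding ln_norm_deriv2_def x2_weight_def sum_x2_entry_below using op_norm_pos[of n]
    by (simp add: field_simps power2_eq_square)
qed

lemma sum_ln_norm_deriv2_telescope: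
  "(\<Sum>n<Suc m. ln_norm_deriv2 n)
     = x2_weight m (m+1) + x2_weight m (m+2) + (if m \<ge> 1 then x2_weight (m-1) (m+1) else 0)"
proof (induction m)
  case 0
  then show ?case using ln_norm_deriv2_eq[of 0] by simp
next
  case (Suc m)
  then show ?case
    using ln_norm_deriv2_eq[of "Suc m"] x2_weight_sym[of m "Suc m"] x2_weight_sym[of "m - 1" "Suc m"]
    by (cases m) (auto simp: x2_weight_sym)
qed

lemma sum_ln_norm_deriv2:
  assumes "N \<ge> 1"
  shows "(\<Sum>n<N. ln_norm_deriv2 n)
     = c N * (c (N - 1) + c (N + 1) + (b N)\<^sup>2 + 2 * b N * b (N - 1) + (b (N - 1))\<^sup>2)"
proof -
  obtain m where N: "N = Suc m" using assms by (cases N) auto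
  have "x2_weight k (Suc (Suc k)) = c (Suc (Suc k)) * c (Suc k)" for k
    unfolding x2_weight_def x2_entry_Suc_Suc op_gamma_sq_def
    using op_norm_pos[of k] op_norm_pos[of "Suc k"] by (simp add: field_simps power2_eq_square)
  moreover have "x2_weight m (Suc m) = c (Suc m) * (b m + b (Suc m))\<^sup>2"
    unfolding x2_weight_def x2_entry_Suc op_gamma_sq_def
    using op_norm_pos[of m] op_norm_pos[of "Suc m"] by (simp add: field_simps power2_eq_square)
  moreover have "(if m \<ge> 1 then x2_weight (m-1) (m+1) else 0) = c (Suc m) * c m"
    using calculation(1)[of "m - 1"] by (cases m) (auto simp: op_gamma_sq_def)
  ultimately show ?thesis unfolding N sum_ln_norm_deriv2_telescope
    by (simp add: power2_eq_square algebra_simps)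
qed

end

lemma det_upper_unitriangular:
  fixes A :: "'a :: comm_ring_1 mat"
  assumes "A \<in> carrier_mat n n" and "upper_triangular A" and "\<And>i. i < n \<Longrightarrow> A $$ (i, i) = 1"
  shows "Determinant.det A = 1"
proof -
  have "diag_mat A = map (\<lambda>_. 1) [0..<n]"
    using assms(1,3) unfolding diag_mat_def by (auto intro: map_cong)
  then show ?thesis using det_upper_triangular[OF assms(2,1)] by (simp add: map_replicate_const)
qed

lemma det_mat_scale_rows:
  "Determinant.det (mat m m (\<lambda>(j,i). (d j :: 'a :: comm_ring_1) * f j i))
     = (\<Prod>j<m. d j) * Determinant.det (mat m m (\<lambda>(j,i). f j i))"
proof -
  have "Determinant.det (mat m m (\<lambda>(j,i). d j * f j i))
     = (\<Sum>p | p permutes {0..<m}. (\<Prod>j<m. d j) * (of_int (sign p) * (\<Prod>i = 0..<m. f i (p i))))"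
    by (subst det_def'[of _ m]) (auto intro!: sum.cong simp: prod.distrib atLeast0LessThan)
  also have "\<dots> = (\<Prod>j<m. d j) * Determinant.det (mat m m (\<lambda>(j,i). f j i))"
    by (subst det_def'[of _ m]) (auto simp: sum_distrib_left)
  finally show ?thesis .
qed

text \<open>Subtracting \<open>x\<^sub>0\<close> times each column of the Vandermonde matrix from the next one.\<close>
lemma vandermonde_mat_column_reduce:
  fixes x :: "nat \<Rightarrow> 'a :: comm_ring_1"
  shows "mat n n (\<lambda>(j,i). x j ^ i) * mat n n (\<lambda>(a,i). (if a = i then 1 else 0) - (if Suc a = i then x 0 else 0))
     = mat n n (\<lambda>(j,i). if i = 0 then 1 else (x j - x 0) * x j ^ (i - 1))"
proof (rule eq_matI)
  fix j i assume "j < dim_row (mat n n (\<lambda>(j,i). if i = 0 then 1 else (x j - x 0) * x j ^ (i - 1)))"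
    and "i < dim_col (mat n n (\<lambda>(j,i). if i = 0 then 1 else (x j - x 0) * x j ^ (i - 1)))"
  then have j: "j < n" and i: "i < n" by auto
  have "(\<Sum>a = 0..<n. x j ^ a * ((if a = i then 1 else 0) - (if Suc a = i then x 0 else 0)))
      = (\<Sum>a = 0..<n. if a = i then x j ^ a else 0) - (\<Sum>a = 0..<n. if Suc a = i then x 0 * x j ^ a else 0)"
    unfolding sum_subtractf[symmetric] by (rule sum.cong) auto
  also have "\<dots> = (if i = 0 then 1 else (x j - x 0) * x j ^ (i - 1))"
    using i by (cases i) (auto simp: algebra_simps)
  finally show "(mat n n (\<lambda>(j,i). x j ^ i)
      * mat n n (\<lambda>(a,i). (if a = i then 1 else 0) - (if Suc a = i then x 0 else 0))) $$ (j, i)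
      = mat n n (\<lambda>(j,i). if i = 0 then 1 else (x j - x 0) * x j ^ (i - 1)) $$ (j, i)"
    using i j by (simp add: scalar_prod_def)
qed auto

lemma det_vandermonde:
  "Determinant.det (mat n n (\<lambda>(j,i). (x j :: 'a :: idom) ^ i)) = (\<Prod>j<n. \<Prod>k\<in>{Suc j..<n}. (x k - x j))"
proof (induction n arbitrary: x)
  case 0
  then show ?case by (simp add: det_dim_zero)
next
  case (Suc m)
  define E :: "'a mat" where
    "E = mat (Suc m) (Suc m) (\<lambda>(a,i). (if a = i then 1 else 0) - (if Suc a = i then x 0 else 0))"
  define A where "A = mat m m (\<lambda>(j,i). (x (Suc j) - x 0) * x (Suc j) ^ i)"
  have E: "E \<in> carrier_mat (Suc m) (Suc m)" and "Determinant.det E = 1"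
    unfolding E_def by (auto intro!: det_upper_unitriangular simp: upper_triangular_def)
  have "mat (Suc m) (Suc m) (\<lambda>(j,i). x j ^ i) * E
      = four_block_mat (mat 1 1 (\<lambda>_. 1)) (0\<^sub>m 1 m) (mat m 1 (\<lambda>_. 1)) A"
    unfolding E_def vandermonde_mat_column_reduce A_def
    by (rule eq_matI) (auto simp: four_block_mat_def)
  then have "Determinant.det (mat (Suc m) (Suc m) (\<lambda>(j,i). x j ^ i)) = Determinant.det A"
    using det_mult[OF _ E, of "mat (Suc m) (Suc m) (\<lambda>(j,i). x j ^ i)"] \<open>Determinant.det E = 1\<close>
      det_four_block_mat_upper_right_zero[of "mat 1 1 (\<lambda>_. 1::'a)" 1 "0\<^sub>m 1 m" m "mat m 1 (\<lambda>_. 1)" A]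
    by (simp add: A_def det_single)
  also have "\<dots> = (\<Prod>j<m. x (Suc j) - x 0) * (\<Prod>j<m. \<Prod>k\<in>{Suc j..<m}. (x (Suc k) - x (Suc j)))"
    unfolding A_def det_mat_scale_rows Suc.IH[of "\<lambda>j. x (Suc j)"] ..
  also have "\<dots> = (\<Prod>j<Suc m. \<Prod>k\<in>{Suc j..<Suc m}. (x k - x j))"
    by (simp only: prod.lessThan_Suc_shift prod.shift_bounds_Suc_ivl)
      (simp add: atLeast0LessThan prod.shift_bounds_Suc_ivl[symmetric])
  finally show ?case .
qed

lemma vandermonde_eq_sum_permutes:
  fixes P :: "nat \<Rightarrow> real poly"
  assumes "\<And>i. coeff (P i) i = 1" and "\<And>i. deg_lt (P i) (Suc i)"
  shows "(\<Prod>j<n. \<Prod>k\<in>{Suc j..<n}. (z k - z j))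
     = (\<Sum>p | p permutes {0..<n}. of_int (sign p) * (\<Prod>j<n. poly (P (p j)) (z j)))"
proof -
  define U where "U = mat n n (\<lambda>(a,i). coeff (P i) a)"
  have U: "U \<in> carrier_mat n n" and "Determinant.det U = 1"
    using assms unfolding U_def deg_lt_def
    by (auto intro!: det_upper_unitriangular simp: upper_triangular_def)
  have "mat n n (\<lambda>(j,i). z j ^ i) * U = mat n n (\<lambda>(j,i). poly (P i) (z j))"
  proof (rule eq_matI)
    fix j i assume "j < dim_row (mat n n (\<lambda>(j,i). poly (P i) (z j)))"
      and "i < dim_col (mat n n (\<lambda>(j,i). poly (P i) (z j)))"
    then have j: "j < n" and i: "i < n" by auto
    have "deg_lt (P i) n" using deg_lt_mono[OF assms(2)[of i], of n] i by simp
    then show "(mat n n (\<lambda>(j,i). z j ^ i) * U) $$ (j, i) = mat n n (\<lambda>(j,i). poly (P i) (z j)) $$ (j, i)"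
      using i j unfolding U_def
      by (simp add: scalar_prod_def poly_eq_sum_deg_lt atLeast0LessThan mult.commute)
  qed (auto simp: U_def)
  then have "Determinant.det (mat n n (\<lambda>(j,i). z j ^ i)) = Determinant.det (mat n n (\<lambda>(j,i). poly (P i) (z j)))"
    using det_mult[OF _ U, of "mat n n (\<lambda>(j,i). z j ^ i)"] \<open>Determinant.det U = 1\<close> by simp
  then show ?thesis
    unfolding det_vandermonde
    by (subst (asm) det_def'[of _ n]) (auto intro!: sum.cong prod.cong simp: atLeast0LessThan)
qed

lemma vandermonde_sq_eq_sum_permutes:
  fixes P :: "nat \<Rightarrow> real poly"
  assumes "\<And>i. coeff (P i) i = 1" and "\<And>i. deg_lt (P i) (Suc i)"
  shows "(\<Prod>j<n. \<Prod>k\<in>{Suc j..<n}. (z j - z k)\<^sup>2)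
     = (\<Sum>p | p permutes {0..<n}. \<Sum>q | q permutes {0..<n}. of_int (sign p * sign q) *
          (\<Prod>j<n. poly (P (p j)) (z j) * poly (P (q j)) (z j)))"
proof -
  have "(\<Prod>j<n. \<Prod>k\<in>{Suc j..<n}. (z j - z k)\<^sup>2) = (\<Prod>j<n. \<Prod>k\<in>{Suc j..<n}. (z k - z j))\<^sup>2"
    by (simp add: power2_commute prod_power_distrib)
  then show ?thesis
    unfolding vandermonde_eq_sum_permutes[OF assms] power2_eq_square
    by (simp add: sum_product prod.distrib algebra_simps)
qed

lemma abs_exp_minus_taylor_le:
  fixes H :: real
  shows "\<bar>exp (- H) - 1 + H\<bar> \<le> H\<^sup>2 / 2 * max 1 (exp (- H))"
proof (cases "H \<ge> 0")
  case True
  obtain t where "exp (- H) = (\<Sum>m<3. (- H) ^ m / fact m) + exp t / fact 3 * (- H) ^ 3"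
    using Maclaurin_exp_le[of "- H" 3] by blast
  then have "exp (- H) = 1 - H + H\<^sup>2 / 2 - exp t / 6 * H ^ 3"
    by (simp add: numeral_3_eq_3 power2_eq_square fact_numeral)
  moreover have "exp t / 6 * H ^ 3 \<ge> 0" using True by simp
  moreover have "exp (- H) - 1 + H \<ge> 0" using exp_ge_add_one_self[of "- H"] by simp
  moreover have "H\<^sup>2 / 2 \<le> H\<^sup>2 / 2 * max 1 (exp (- H))"
    by (rule mult_le_cancel_left1[THEN iffD2]) simp
  ultimately show ?thesis by linarith
next
  case False
  obtain t where t: "\<bar>t\<bar> \<le> \<bar>- H\<bar>"
    and "exp (- H) = (\<Sum>m<2. (- H) ^ m / fact m) + exp t / fact 2 * (- H) ^ 2"
    using Maclaurin_exp_le[of "- H" 2] by blast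
  then have E: "exp (- H) - 1 + H = exp t / 2 * H\<^sup>2" by (simp add: numeral_2_eq_2)
  have "exp t \<le> max 1 (exp (- H))" using t False by simp
  then have "exp t / 2 * H\<^sup>2 \<le> max 1 (exp (- H)) / 2 * H\<^sup>2"
    by (intro mult_right_mono divide_right_mono) auto
  then show ?thesis unfolding E by (simp add: mult.commute)
qed

lemma has_real_derivative_if_quadratic_remainder:
  fixes f :: "real \<Rightarrow> real"
  assumes "\<forall>\<^sub>F y in at x. \<bar>f y - f x - (y - x) * D\<bar> \<le> M * (y - x)\<^sup>2"
  shows "(f has_real_derivative D) (at x)"
proof -
  have "\<forall>\<^sub>F y in at x. norm ((f y - f x) / (y - x) - D) \<le> M * \<bar>y - x\<bar>"
    using assms eventually_at_in_open[OF open_UNIV UNIV_I, of x]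
  proof eventually_elim
    case (elim y)
    then have "y \<noteq> x" by simp
    then have "norm ((f y - f x) / (y - x) - D) = \<bar>f y - f x - (y - x) * D\<bar> / \<bar>y - x\<bar>"
      by (simp add: field_simps)
    also have "\<dots> \<le> M * (y - x)\<^sup>2 / \<bar>y - x\<bar>" using elim by (intro divide_right_mono) auto
    also have "\<dots> = M * \<bar>y - x\<bar>"
      using \<open>y \<noteq> x\<close> by (cases "y < x") (auto simp: power2_eq_square field_simps)
    finally show ?case .
  qed
  moreover have "((\<lambda>y. M * \<bar>y - x\<bar>) \<longlongrightarrow> 0) (at x)"
    by (rule tendsto_eq_intros refl)+ simp
  ultimately have "((\<lambda>y. (f y - f x) / (y - x) - D) \<longlongrightarrow> 0) (at x)" by (rule Lim_null_comparison)
  then show ?thesis by (simp add: has_field_derivative_iff LIM_zero_iff)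
qed

lemma poly_eq_sum_atMost:
  fixes p :: "real poly"
  assumes "degree p \<le> K"
  shows "poly p x = (\<Sum>a\<le>K. coeff p a * x ^ a)"
proof -
  have "poly p x = (\<Sum>i\<le>degree p. coeff p i * x ^ i)" by (rule poly_altdef)
  also have "\<dots> = (\<Sum>a\<le>K. coeff p a * x ^ a)"
    using assms by (intro sum.mono_neutral_left) (auto simp: coeff_eq_0)
  finally show ?thesis .
qed

locale gaussian_tilt =
  fixes w :: "real \<Rightarrow> real" and s\<^sub>0 :: real
  assumes w_pos: "w x > 0"
    and borel_measurable_w [measurable]: "w \<in> borel_measurable borel"
    and integrable_abs_power_tilt: "integrable lborel (\<lambda>x. \<bar>x\<bar> ^ k * (w x * exp (- s\<^sub>0 * x\<^sup>2)))"
begin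

definition tilt_weight :: "real \<Rightarrow> real \<Rightarrow> real" where
  "tilt_weight s x = w x * exp (- s * x\<^sup>2)"

lemma tilt_weight_pos: "tilt_weight s x > 0"
  unfolding tilt_weight_def using w_pos by simp

lemma borel_measurable_tilt_weight [measurable]: "tilt_weight s \<in> borel_measurable borel"
  unfolding tilt_weight_def by measurable

lemma tilt_weight_shift: "tilt_weight s x = tilt_weight r x * exp (- (s - r) * x\<^sup>2)"
  unfolding tilt_weight_def by (simp add: mult.assoc mult_exp_exp algebra_simps)

lemma tilt_weight_antimono: "s\<^sub>0 \<le> s \<Longrightarrow> tilt_weight s x \<le> tilt_weight s\<^sub>0 x"
  unfolding tilt_weight_def using w_pos[of x] by (auto intro!: mult_left_mono mult_right_mono)

lemma integrable_power_tilt: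
  assumes "s\<^sub>0 \<le> s"
  shows "integrable lborel (\<lambda>x. x ^ k * tilt_weight s x)"
proof (rule Bochner_Integration.integrable_bound[OF integrable_abs_power_tilt[of k]])
  show "AE x in lborel. norm (x ^ k * tilt_weight s x) \<le> norm (\<bar>x\<bar> ^ k * (w x * exp (- s\<^sub>0 * x\<^sup>2)))"
    using tilt_weight_antimono[OF assms] tilt_weight_pos w_pos unfolding tilt_weight_def[symmetric]
    by (auto simp: abs_mult power_abs abs_of_pos intro!: mult_left_mono AE_I2)
qed measurable

lemma integrable_poly_tilt:
  assumes "s\<^sub>0 \<le> s"
  shows "integrable lborel (\<lambda>x. poly p x * tilt_weight s x)"
proof -
  have "integrable lborel (\<lambda>x. \<Sum>i\<le>degree p. coeff p i * (x ^ i * tilt_weight s x))"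
    using integrable_power_tilt[OF assms] by (intro Bochner_Integration.integrable_sum integrable_mult_right)
  moreover have "(\<Sum>i\<le>degree p. coeff p i * (x ^ i * tilt_weight s x)) = poly p x * tilt_weight s x" for x
    by (simp add: poly_altdef sum_distrib_left algebra_simps)
  ultimately show ?thesis by simp
qed

definition moment :: "nat \<Rightarrow> real \<Rightarrow> real" where
  "moment k s = (\<integral>x. x ^ k * tilt_weight s x \<partial>lborel)"

lemma tilt_weight_remainder:
  assumes "s\<^sub>0 \<le> y" and "s\<^sub>0 \<le> s"
  shows "\<bar>x ^ k * tilt_weight y x - x ^ k * tilt_weight s x + (y - s) * (x ^ (k + 2) * tilt_weight s x)\<bar>
    \<le> (\<bar>x\<bar> ^ (k + 4) * tilt_weight s\<^sub>0 x) / 2 * (y - s)\<^sup>2"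
proof -
  define H where "H = (y - s) * x\<^sup>2"
  have Wy: "tilt_weight y x = tilt_weight s x * exp (- H)"
    unfolding H_def using tilt_weight_shift[of y x s] by (simp add: algebra_simps)
  have "x ^ k * tilt_weight y x - x ^ k * tilt_weight s x + (y - s) * (x ^ (k + 2) * tilt_weight s x)
      = x ^ k * tilt_weight s x * (exp (- H) - 1 + H)"
    unfolding Wy by (simp add: H_def power_add power2_eq_square algebra_simps)
  then have "\<bar>x ^ k * tilt_weight y x - x ^ k * tilt_weight s x + (y - s) * (x ^ (k + 2) * tilt_weight s x)\<bar>
      = \<bar>x\<bar> ^ k * tilt_weight s x * \<bar>exp (- H) - 1 + H\<bar>"
    using tilt_weight_pos[of s x] by (simp add: abs_mult power_abs)
  also have "\<dots> \<le> \<bar>x\<bar> ^ k * tilt_weight s x * (H\<^sup>2 / 2 * max 1 (exp (- H)))"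
    using tilt_weight_pos[of s x] abs_exp_minus_taylor_le[of H] by (intro mult_left_mono) auto
  also have "\<dots> = \<bar>x\<bar> ^ k * H\<^sup>2 / 2 * (tilt_weight s x * max 1 (exp (- H)))"
    by (simp add: algebra_simps)
  also have "tilt_weight s x * max 1 (exp (- H)) = max (tilt_weight s x) (tilt_weight y x)"
    unfolding Wy using tilt_weight_pos[of s x] by (simp add: max_mult_distrib_left)
  also have "\<bar>x\<bar> ^ k * H\<^sup>2 / 2 * max (tilt_weight s x) (tilt_weight y x)
      \<le> \<bar>x\<bar> ^ k * H\<^sup>2 / 2 * tilt_weight s\<^sub>0 x"
    using tilt_weight_antimono[OF assms(1), of x] tilt_weight_antimono[OF assms(2), of x]
    by (intro mult_left_mono) auto
  also have "\<dots> = (\<bar>x\<bar> ^ (k + 4) * tilt_weight s\<^sub>0 x) / 2 * (y - s)\<^sup>2"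
    unfolding H_def by (simp add: power_add power_mult_distrib power_even_abs flip: power_mult)
  finally show ?thesis .
qed

lemma moment_remainder:
  assumes "s\<^sub>0 \<le> y" and "s\<^sub>0 \<le> s"
  shows "\<bar>moment k y - moment k s + (y - s) * moment (k + 2) s\<bar>
    \<le> (\<integral>x. \<bar>x\<bar> ^ (k + 4) * tilt_weight s\<^sub>0 x \<partial>lborel) / 2 * (y - s)\<^sup>2"
proof -
  let ?f = "\<lambda>x. x ^ k * tilt_weight y x - x ^ k * tilt_weight s x + (y - s) * (x ^ (k + 2) * tilt_weight s x)"
  have int: "integrable lborel ?f"
    using integrable_power_tilt[OF assms(1)] integrable_power_tilt[OF assms(2)]
    by (intro Bochner_Integration.integrable_add Bochner_Integration.integrable_diff integrable_mult_right)
  have "moment k y - moment k s + (y - s) * moment (k + 2) s = (\<integral>x. ?f x \<partial>lborel)"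
    unfolding moment_def using integrable_power_tilt[OF assms(1)] integrable_power_tilt[OF assms(2)]
      integrable_mult_right[OF integrable_power_tilt[OF assms(2), of "k + 2"], of "y - s"]
    by (simp add: Bochner_Integration.integral_add Bochner_Integration.integral_diff
        Bochner_Integration.integrable_diff)
  then have "\<bar>moment k y - moment k s + (y - s) * moment (k + 2) s\<bar> = \<bar>\<integral>x. ?f x \<partial>lborel\<bar>"
    by simp
  also have "\<dots> \<le> (\<integral>x. \<bar>?f x\<bar> \<partial>lborel)" by (rule integral_abs_bound)
  also have "\<dots> \<le> (\<integral>x. (\<bar>x\<bar> ^ (k + 4) * tilt_weight s\<^sub>0 x) / 2 * (y - s)\<^sup>2 \<partial>lborel)"
    using int integrable_abs_power_tilt[of "k + 4"] tilt_weight_remainder[OF assms]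
    unfolding tilt_weight_def[symmetric] by (intro integral_mono) auto
  finally show ?thesis by simp
qed

lemma has_real_derivative_moment:
  assumes "s\<^sub>0 < s"
  shows "(moment k has_real_derivative - moment (k + 2) s) (at s)"
proof (rule has_real_derivative_if_quadratic_remainder)
  have "\<forall>\<^sub>F y in at s. y \<in> {s\<^sub>0<..}" using assms by (intro eventually_at_in_open') auto
  then show "\<forall>\<^sub>F y in at s. \<bar>moment k y - moment k s - (y - s) * - moment (k + 2) s\<bar>
      \<le> (\<integral>x. \<bar>x\<bar> ^ (k + 4) * tilt_weight s\<^sub>0 x \<partial>lborel) / 2 * (y - s)\<^sup>2"
    by eventually_elim (use moment_remainder[of _ s k] assms in auto)
qed

definition tilt_form :: "nat \<Rightarrow> real \<Rightarrow> real poly \<Rightarrow> real poly \<Rightarrow> real" where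
  "tilt_form m s p q = (\<integral>x. x ^ m * poly p x * poly q x * tilt_weight s x \<partial>lborel)"

lemma integrable_tilt_form:
  "s\<^sub>0 \<le> s \<Longrightarrow> integrable lborel (\<lambda>x. x ^ m * poly p x * poly q x * tilt_weight s x)"
  using integrable_poly_tilt[of s "monom 1 m * p * q"] by (simp add: poly_monom mult.assoc)

lemma tilt_form_sym: "tilt_form m s p q = tilt_form m s q p"
  unfolding tilt_form_def by (simp add: algebra_simps)

lemma tilt_form_2: "tilt_form 2 s p q = tilt_form 0 s (x2_times p) q"
  unfolding tilt_form_def poly_x2_times by (simp add: algebra_simps)

lemma tilt_form_4: "tilt_form 4 s p q = tilt_form 0 s (x2_times p) (x2_times q)"
  unfolding tilt_form_def poly_x2_times by (simp add: power4_eq_xxxx power2_eq_square algebra_simps)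

lemma tilt_form_eq_sum_moments:
  assumes "s\<^sub>0 \<le> s" and "degree p \<le> K" and "degree q \<le> K"
  shows "tilt_form m s p q = (\<Sum>a\<le>K. \<Sum>b\<le>K. coeff p a * coeff q b * moment (a + b + m) s)"
proof -
  have "x ^ m * poly p x * poly q x * tilt_weight s x
      = (\<Sum>a\<le>K. \<Sum>b\<le>K. coeff p a * coeff q b * (x ^ (a + b + m) * tilt_weight s x))" for x
    unfolding poly_eq_sum_atMost[OF assms(2)] poly_eq_sum_atMost[OF assms(3)]
    by (simp add: sum_distrib_left sum_distrib_right power_add algebra_simps)
  then show ?thesis
    unfolding tilt_form_def moment_def using integrable_power_tilt[OF assms(1)]
    by (simp add: Bochner_Integration.integrable_sum Bochner_Integration.integral_sum)
qed

lemma tilt_form_self_pos: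
  assumes "s\<^sub>0 \<le> s" and "p \<noteq> 0"
  shows "tilt_form 0 s p p > 0"
proof -
  have int: "integrable lborel (\<lambda>x. (poly p x)\<^sup>2 * tilt_weight s x)"
    using integrable_tilt_form[OF assms(1), of 0 p p] by (simp add: power2_eq_square)
  have nonneg: "AE x in lborel. 0 \<le> (poly p x)\<^sup>2 * tilt_weight s x"
    using tilt_weight_pos[of s] by (intro AE_I2 mult_nonneg_nonneg) (auto intro: less_imp_le)
  have eq: "tilt_form 0 s p p = (\<integral>x. (poly p x)\<^sup>2 * tilt_weight s x \<partial>lborel)"
    unfolding tilt_form_def by (simp add: power2_eq_square)
  have "AE x in lborel. x \<notin> {x. poly p x = 0}"
    using poly_roots_finite[OF assms(2)] by (intro AE_not_in finite_imp_null_set_lborel)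
  then have nonzero: "AE x in lborel. (poly p x)\<^sup>2 * tilt_weight s x \<noteq> 0"
    by eventually_elim (simp add: tilt_weight_pos[THEN less_imp_neq, THEN not_sym])
  have "(\<integral>x. (poly p x)\<^sup>2 * tilt_weight s x \<partial>lborel) \<noteq> 0"
  proof
    assume "(\<integral>x. (poly p x)\<^sup>2 * tilt_weight s x \<partial>lborel) = 0"
    then have "AE x in lborel. (poly p x)\<^sup>2 * tilt_weight s x = 0"
      using integral_nonneg_eq_0_iff_AE[OF int nonneg] by simp
    with nonzero have "AE x::real in lborel. False" by eventually_elim simp
    then show False by (simp add: ae_filter_eq_bot_iff)
  qed
  then show ?thesis unfolding eq using integral_nonneg_AE[OF nonneg] by linarith
qed

lemma hankel_form_tilt_form: "s\<^sub>0 \<le> s \<Longrightarrow> hankel_form (tilt_form 0 s)"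
proof
  fix p q r :: "real poly" and a :: real
  assume s: "s\<^sub>0 \<le> s"
  show "tilt_form 0 s (p + q) r = tilt_form 0 s p r + tilt_form 0 s q r"
    using integrable_tilt_form[OF s, of 0 p r] integrable_tilt_form[OF s, of 0 q r]
    unfolding tilt_form_def by (simp add: algebra_simps)
  show "tilt_form 0 s (Polynomial.smult a p) r = a * tilt_form 0 s p r"
    unfolding tilt_form_def by (simp add: mult.assoc)
  show "tilt_form 0 s p q = tilt_form 0 s q p" by (rule tilt_form_sym)
  show "tilt_form 0 s (pCons 0 p) q = tilt_form 0 s p (pCons 0 q)"
    unfolding tilt_form_def by (simp add: algebra_simps)
  show "p \<noteq> 0 \<Longrightarrow> tilt_form 0 s p p > 0" by (rule tilt_form_self_pos[OF s])
qed

lemma tilt_form_product_rule_eq_sum_moments: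
  assumes "s\<^sub>0 \<le> s" and p: "degree p \<le> K" and q: "degree q \<le> K"
  shows "tilt_form m s (\<Sum>a\<le>K. monom (c a) a) q + tilt_form m s p (\<Sum>a\<le>K. monom (e a) a)
      - tilt_form (m + 2) s p q
    = (\<Sum>a\<le>K. \<Sum>b\<le>K. c a * coeff q b * moment (a + b + m) s + coeff p a * e b * moment (a + b + m) s
      - coeff p a * coeff q b * moment (a + b + m + 2) s)"
proof -
  have deg_monoms: "degree (\<Sum>a\<le>K. monom (f a) a) \<le> K" for f :: "nat \<Rightarrow> real"
    by (intro degree_sum_le) (auto intro: order.trans[OF degree_monom_le])
  have coeff_monoms: "coeff (\<Sum>a\<le>K. monom (f a) a) j = f j" if "j \<le> K" for f :: "nat \<Rightarrow> real" and j
    using that by (simp add: coeff_sum coeff_monom)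
  have "tilt_form m s (\<Sum>a\<le>K. monom (c a) a) q = (\<Sum>a\<le>K. \<Sum>b\<le>K. c a * coeff q b * moment (a + b + m) s)"
    unfolding tilt_form_eq_sum_moments[OF assms(1) deg_monoms q]
    by (intro sum.cong refl) (simp add: coeff_monoms)
  moreover have "tilt_form m s p (\<Sum>a\<le>K. monom (e a) a) = (\<Sum>a\<le>K. \<Sum>b\<le>K. coeff p a * e b * moment (a + b + m) s)"
    unfolding tilt_form_eq_sum_moments[OF assms(1) p deg_monoms]
    by (intro sum.cong refl) (simp add: coeff_monoms)
  moreover have "tilt_form (m + 2) s p q
      = (\<Sum>a\<le>K. \<Sum>b\<le>K. coeff p a * coeff q b * moment (a + b + m + 2) s)"
    unfolding tilt_form_eq_sum_moments[OF assms(1) p q] by (simp add: add.assoc)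
  ultimately show ?thesis by (simp add: sum.distrib sum_subtractf)
qed

lemma has_real_derivative_tilt_form:
  assumes s: "s\<^sub>0 < s"
    and deg: "\<And>r. degree (P r) \<le> K" "\<And>r. degree (R r) \<le> K"
    and dP: "\<And>a. a \<le> K \<Longrightarrow> ((\<lambda>r. coeff (P r) a) has_real_derivative dp a) (at s)"
    and dR: "\<And>a. a \<le> K \<Longrightarrow> ((\<lambda>r. coeff (R r) a) has_real_derivative dr a) (at s)"
  shows "((\<lambda>r. tilt_form m r (P r) (R r)) has_real_derivative
      tilt_form m s (\<Sum>a\<le>K. monom (dp a) a) (R s) + tilt_form m s (P s) (\<Sum>a\<le>K. monom (dr a) a)
       - tilt_form (m + 2) s (P s) (R s)) (at s)"
proof -
  define G where "G r = (\<Sum>a\<le>K. \<Sum>b\<le>K. coeff (P r) a * coeff (R r) b * moment (a + b + m) r)" for r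
  have "(G has_real_derivative (\<Sum>a\<le>K. \<Sum>b\<le>K.
      dp a * coeff (R s) b * moment (a + b + m) s + coeff (P s) a * dr b * moment (a + b + m) s
      - coeff (P s) a * coeff (R s) b * moment (a + b + m + 2) s)) (at s)"
    unfolding G_def
  proof (intro DERIV_sum)
    fix a b assume "a \<in> {..K}" "b \<in> {..K}"
    then show "((\<lambda>r. coeff (P r) a * coeff (R r) b * moment (a + b + m) r) has_real_derivative
        dp a * coeff (R s) b * moment (a + b + m) s + coeff (P s) a * dr b * moment (a + b + m) s
      - coeff (P s) a * coeff (R s) b * moment (a + b + m + 2) s) (at s)"
      using DERIV_mult[OF DERIV_mult[OF dP[of a] dR[of b]] has_real_derivative_moment[OF s, of "a + b + m"]]
      by (auto elim!: DERIV_cong simp: algebra_simps)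
  qed
  from this[folded tilt_form_product_rule_eq_sum_moments[OF less_imp_le[OF s] deg]] show ?thesis
  proof (rule has_field_derivative_transform_within_open[where S = "{s\<^sub>0<..}"])
    fix r assume "r \<in> {s\<^sub>0<..}"
    then show "G r = tilt_form m r (P r) (R r)"
      unfolding G_def using tilt_form_eq_sum_moments[OF _ deg, of r m] by simp
  qed (use s in auto)
qed

lemma tilt_form_differentiable:
  assumes "s\<^sub>0 < s" and "\<And>r. degree (P r) \<le> K" "\<And>r. degree (R r) \<le> K"
    and "\<And>a. a \<le> K \<Longrightarrow> (\<lambda>r. coeff (P r) a) differentiable (at s)"
    and "\<And>a. a \<le> K \<Longrightarrow> (\<lambda>r. coeff (R r) a) differentiable (at s)"
  shows "(\<lambda>r. tilt_form m r (P r) (R r)) differentiable (at s)"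
proof -
  have "((\<lambda>r. coeff (P r) a) has_real_derivative deriv (\<lambda>r. coeff (P r) a) s) (at s)"
    and "((\<lambda>r. coeff (R r) a) has_real_derivative deriv (\<lambda>r. coeff (R r) a) s) (at s)" if "a \<le> K" for a
    using assms(4,5)[OF that] DERIV_deriv_iff_real_differentiable by blast+
  from has_real_derivative_tilt_form[OF assms(1-3) this, of m] show ?thesis
    unfolding real_differentiable_def by blast
qed

definition tilt_OP :: "real \<Rightarrow> nat \<Rightarrow> real poly" where
  "tilt_OP s = stieltjes_OP (tilt_form 0 s)"

definition tilt_norm :: "real \<Rightarrow> nat \<Rightarrow> real" where
  "tilt_norm s = op_norm (tilt_form 0 s)"

lemma degree_tilt_OP [simp]: "degree (tilt_OP s n) = n"
  unfolding tilt_OP_def by (rule degree_stieltjes_OP)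

lemma tilt_norm_eq: "tilt_norm s n = tilt_form 0 s (tilt_OP s n) (tilt_OP s n)"
  unfolding tilt_norm_def tilt_OP_def op_norm_def ..

lemma tilt_norm_pos: "s\<^sub>0 \<le> s \<Longrightarrow> tilt_norm s n > 0"
  unfolding tilt_norm_def using hankel_form.op_norm_pos[OF hankel_form_tilt_form] by blast

lemma coeff_tilt_OP_top: "n \<le> a \<Longrightarrow> coeff (tilt_OP r n) a = (if a = n then 1 else 0)"
  unfolding tilt_OP_def using stieltjes_OP_coeffs[of "tilt_form 0 r" n] by (auto simp: deg_lt_def)

lemma differentiable_coeff_tilt_OP:
  assumes "s\<^sub>0 < s"
  shows "(\<lambda>r. coeff (tilt_OP r n) a) differentiable (at s)"
proof (induction n arbitrary: a rule: less_induct)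
  case (less n)
  show ?case
  proof (cases n)
    case 0
    then show ?thesis unfolding tilt_OP_def by simp
  next
    case (Suc m)
    have IH: "(\<lambda>r. coeff (tilt_OP r j) a') differentiable (at s)" if "j \<le> m" for j a'
      using less that Suc by simp
    have x_OP: "(\<lambda>r. coeff (pCons 0 (tilt_OP r m)) a') differentiable (at s)" for a'
      using IH by (cases a') simp_all
    have norm: "(\<lambda>r. tilt_norm r j) differentiable (at s) \<and> tilt_norm s j \<noteq> 0" if "j \<le> m" for j
      unfolding tilt_norm_eq using assms IH that tilt_norm_pos[of s j]
      by (auto intro!: tilt_form_differentiable[where K = j] simp: tilt_norm_eq)
    have "(\<lambda>r. tilt_form 0 r (pCons 0 (tilt_OP r m)) (tilt_OP r m)) differentiable (at s)"
      using assms x_OP IH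
      by (intro tilt_form_differentiable[where K = "Suc m"]) (auto intro: order.trans[OF degree_pCons_le])
    then have beta: "(\<lambda>r. op_beta (tilt_form 0 r) m) differentiable (at s)"
      unfolding op_beta_def using norm[of m] unfolding tilt_norm_def tilt_OP_def by simp
    have gamma: "(\<lambda>r. op_gamma_sq (tilt_form 0 r) m) differentiable (at s)"
      unfolding op_gamma_sq_def using norm unfolding tilt_norm_def by (cases m) auto
    have prev: "(\<lambda>r. coeff (if m = 0 then 0 else tilt_OP r (m - 1)) a) differentiable (at s)"
      using IH[of "m - 1" a] by (cases "m = 0") auto
    show ?thesis
      using x_OP beta gamma prev IH[of m] unfolding Suc tilt_OP_def stieltjes_OP_Suc coeff_diff coeff_smult
      by (intro differentiable_diff differentiable_mult) auto
  qed
qed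

definition tilt_OP_deriv :: "real \<Rightarrow> nat \<Rightarrow> real poly" where
  "tilt_OP_deriv s n = (\<Sum>a\<le>n. monom (deriv (\<lambda>r. coeff (tilt_OP r n) a) s) a)"

lemma deg_lt_tilt_OP_deriv: "deg_lt (tilt_OP_deriv s n) n"
  unfolding deg_lt_def tilt_OP_deriv_def by (auto simp: coeff_sum coeff_monom coeff_tilt_OP_top)

lemma has_real_derivative_tilt_form_OP:
  assumes "s\<^sub>0 < s" and "k \<le> n"
  shows "((\<lambda>r. tilt_form m r (tilt_OP r n) (tilt_OP r k)) has_real_derivative
      tilt_form m s (tilt_OP_deriv s n) (tilt_OP s k) + tilt_form m s (tilt_OP s n) (tilt_OP_deriv s k)
      - tilt_form (m + 2) s (tilt_OP s n) (tilt_OP s k)) (at s)"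
proof -
  have "(\<Sum>a\<le>n. monom (deriv (\<lambda>r. coeff (tilt_OP r k) a) s) a) = tilt_OP_deriv s k"
    unfolding tilt_OP_deriv_def using assms(2)
    by (intro sum.mono_neutral_right) (auto simp: coeff_tilt_OP_top)
  moreover have "((\<lambda>r. coeff (tilt_OP r j) a) has_real_derivative deriv (\<lambda>r. coeff (tilt_OP r j) a) s) (at s)" for j a
    using differentiable_coeff_tilt_OP[OF assms(1)] DERIV_deriv_iff_real_differentiable by blast
  then have "((\<lambda>r. tilt_form m r (tilt_OP r n) (tilt_OP r k)) has_real_derivative
      tilt_form m s (tilt_OP_deriv s n) (tilt_OP s k)
      + tilt_form m s (tilt_OP s n) (\<Sum>a\<le>n. monom (deriv (\<lambda>r. coeff (tilt_OP r k) a) s) a)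
      - tilt_form (m + 2) s (tilt_OP s n) (tilt_OP s k)) (at s)"
    unfolding tilt_OP_deriv_def using assms(1) assms(2) by (intro has_real_derivative_tilt_form) auto
  ultimately show ?thesis by simp
qed

lemma has_real_derivative_tilt_norm:
  assumes "s\<^sub>0 < s"
  shows "((\<lambda>r. tilt_norm r n) has_real_derivative - tilt_form 2 s (tilt_OP s n) (tilt_OP s n)) (at s)"
proof -
  interpret hankel_form "tilt_form 0 s" using assms by (intro hankel_form_tilt_form) simp
  have "tilt_form 0 s (tilt_OP_deriv s n) (tilt_OP s n) = 0"
    unfolding tilt_OP_def by (rule B_deg_lt_OP[OF deg_lt_tilt_OP_deriv])
  moreover have "tilt_form 0 s (tilt_OP s n) (tilt_OP_deriv s n) = 0"
    unfolding tilt_OP_def by (rule B_OP_deg_lt[OF deg_lt_tilt_OP_deriv])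
  ultimately show ?thesis
    unfolding tilt_norm_eq using has_real_derivative_tilt_form_OP[OF assms, of n n 0]
    by (simp add: numeral_2_eq_2)
qed

text \<open>Differentiating the orthogonality relation \<open>\<langle>P\<^sub>n, P\<^sub>k\<rangle> = 0\<close>, \<open>k < n\<close>, in \<open>s\<close>.\<close>
lemma tilt_form_OP_deriv_OP:
  assumes "s\<^sub>0 < s" and "k < n"
  shows "tilt_form 0 s (tilt_OP_deriv s n) (tilt_OP s k) = tilt_form 2 s (tilt_OP s n) (tilt_OP s k)"
proof -
  interpret hankel_form "tilt_form 0 s" using assms by (intro hankel_form_tilt_form) simp
  have "((\<lambda>r. tilt_form 0 r (tilt_OP r n) (tilt_OP r k)) has_real_derivative 0) (at s)"
  proof (rule has_field_derivative_transform_within_open[where S = "{s\<^sub>0<..}"])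
    fix r assume "r \<in> {s\<^sub>0<..}"
    then interpret r: hankel_form "tilt_form 0 r" by (intro hankel_form_tilt_form) simp
    show "0 = tilt_form 0 r (tilt_OP r n) (tilt_OP r k)"
      unfolding tilt_OP_def using r.OP_orthogonal[OF assms(2)] by simp
  qed (use assms in auto)
  with has_real_derivative_tilt_form_OP[OF assms(1) less_imp_le[OF assms(2)], of 0]
  have "tilt_form 0 s (tilt_OP_deriv s n) (tilt_OP s k) + tilt_form 0 s (tilt_OP s n) (tilt_OP_deriv s k)
      - tilt_form (0 + 2) s (tilt_OP s n) (tilt_OP s k) = 0"
    by (rule DERIV_unique)
  moreover have "tilt_form 0 s (tilt_OP s n) (tilt_OP_deriv s k) = 0"
    unfolding tilt_OP_def using assms(2)
    by (intro B_OP_deg_lt deg_lt_mono[OF deg_lt_tilt_OP_deriv]) simp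
  ultimately show ?thesis by (simp add: numeral_2_eq_2)
qed

lemma x2_entry_tilt:
  "s\<^sub>0 \<le> s \<Longrightarrow> hankel_form.x2_entry (tilt_form 0 s) n k = tilt_form 2 s (tilt_OP s n) (tilt_OP s k)"
  unfolding hankel_form.x2_entry_def[OF hankel_form_tilt_form] tilt_OP_def tilt_form_2 ..

text \<open>The derivative is \<open>2\<langle>x\<^sup>2 P\<^sub>n', P\<^sub>n\<rangle> - \<langle>x\<^sup>2 P\<^sub>n, x\<^sup>2 P\<^sub>n\<rangle>\<close>; both terms are expanded in the
  orthogonal basis, the first one using \<open>tilt_form_OP_deriv_OP\<close>.\<close>
lemma has_real_derivative_tilt_form_2_OP:
  assumes "s\<^sub>0 < s"
  defines "e \<equiv> hankel_form.x2_entry (tilt_form 0 s)"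
  shows "((\<lambda>r. tilt_form 2 r (tilt_OP r n) (tilt_OP r n)) has_real_derivative
     2 * (\<Sum>k<n. (e n k)\<^sup>2 / tilt_norm s k) - (\<Sum>k<n+3. (e n k)\<^sup>2 / tilt_norm s k)) (at s)"
proof -
  interpret hankel_form "tilt_form 0 s" using assms by (intro hankel_form_tilt_form) simp
  have e: "e n k = tilt_form 0 s (x2_times (tilt_OP s n)) (tilt_OP s k)" for k
    unfolding e_def x2_entry_def tilt_OP_def ..
  have "tilt_form 2 s (tilt_OP_deriv s n) (tilt_OP s n) = tilt_form 0 s (x2_times (tilt_OP_deriv s n)) (tilt_OP s n)"
    by (rule tilt_form_2)
  also have "\<dots> = tilt_form 0 s (tilt_OP_deriv s n) (x2_times (tilt_OP s n))"
    by (rule B_x2_times)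
  also have "\<dots> = (\<Sum>k<n. tilt_form 0 s (tilt_OP_deriv s n) (tilt_OP s k) * e n k / tilt_norm s k)"
    unfolding e tilt_OP_def tilt_norm_def by (rule OP_parseval[OF deg_lt_tilt_OP_deriv])
  also have "\<dots> = (\<Sum>k<n. (e n k)\<^sup>2 / tilt_norm s k)"
    using tilt_form_OP_deriv_OP[OF assms(1)] x2_entry_tilt[of s n] assms(1)
    by (intro sum.cong) (auto simp: e_def power2_eq_square)
  finally have deriv_part: "tilt_form 2 s (tilt_OP_deriv s n) (tilt_OP s n) = (\<Sum>k<n. (e n k)\<^sup>2 / tilt_norm s k)" .
  have deg: "deg_lt (x2_times (P n)) (n + 3)"
    using deg_lt_x2_times[OF deg_lt_stieltjes_OP_iff[of _ n "Suc n", THEN iffD2, OF lessI]]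
    by (simp add: numeral_3_eq_3)
  then have "tilt_form 4 s (tilt_OP s n) (tilt_OP s n) = (\<Sum>k<n+3. (e n k)\<^sup>2 / tilt_norm s k)"
    unfolding tilt_form_4 e tilt_OP_def tilt_norm_def OP_parseval[OF deg, of "x2_times (P n)"] by (simp add: power2_eq_square)
  then show ?thesis
    using has_real_derivative_tilt_form_OP[OF assms(1), of n n 2] deriv_part tilt_form_sym[of 2 s]
    by simp
qed

lemma has_real_derivative_tilt_form_2_OP_div_norm:
  assumes "s\<^sub>0 < s"
  shows "((\<lambda>r. - tilt_form 2 r (tilt_OP r n) (tilt_OP r n) / tilt_norm r n) has_real_derivative
     hankel_form.ln_norm_deriv2 (tilt_form 0 s) n) (at s)"
proof -
  interpret hankel_form "tilt_form 0 s" using assms by (intro hankel_form_tilt_form) simp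
  let ?S = "\<lambda>j. \<Sum>k<j. (x2_entry n k)\<^sup>2 / tilt_norm s k"
  have A: "tilt_form 2 s (tilt_OP s n) (tilt_OP s n) = x2_entry n n"
    using x2_entry_tilt assms by simp
  have "((\<lambda>r. - tilt_form 2 r (tilt_OP r n) (tilt_OP r n) / tilt_norm r n) has_real_derivative
      (- (2 * ?S n - ?S (n + 3)) * tilt_norm s n - (- x2_entry n n) * (- x2_entry n n))
        / (tilt_norm s n * tilt_norm s n)) (at s)"
    using DERIV_divide[OF DERIV_minus[OF has_real_derivative_tilt_form_2_OP[OF assms, of n]]
        has_real_derivative_tilt_norm[OF assms, of n]] tilt_norm_pos[of s n] assms
    unfolding A by simp
  then show ?thesis
    by (rule DERIV_cong) (use op_norm_pos[of n] in \<open>simp add: ln_norm_deriv2_def tilt_norm_def field_simps power2_eq_square\<close>)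
qed

lemma has_real_derivative_ln_tilt_norm:
  assumes "s\<^sub>0 < s"
  shows "((\<lambda>r. ln (tilt_norm r n)) has_real_derivative
     - tilt_form 2 s (tilt_OP s n) (tilt_OP s n) / tilt_norm s n) (at s)"
  using DERIV_chain2[OF DERIV_ln has_real_derivative_tilt_norm[OF assms]] tilt_norm_pos[of s n] assms
  by (simp add: field_simps)

definition ln_heine_deriv :: "nat \<Rightarrow> real \<Rightarrow> real" where
  "ln_heine_deriv N = (\<lambda>t. \<Sum>n<N. - tilt_form 2 t (tilt_OP t n) (tilt_OP t n) / tilt_norm t n)"

lemma has_real_derivative_ln_heine:
  assumes "s\<^sub>0 < t"
  shows "((\<lambda>r. ln (fact N * (\<Prod>n<N. tilt_norm r n))) has_real_derivative ln_heine_deriv N t) (at t)"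
proof -
  have "((\<lambda>r. ln (fact N) + (\<Sum>n<N. ln (tilt_norm r n))) has_real_derivative 0 + ln_heine_deriv N t) (at t)"
    unfolding ln_heine_deriv_def using assms
    by (intro DERIV_add DERIV_const DERIV_sum has_real_derivative_ln_tilt_norm)
  then show ?thesis unfolding add_0_left
  proof (rule has_field_derivative_transform_within_open[where S = "{s\<^sub>0<..}"])
    fix r assume "r \<in> {s\<^sub>0<..}"
    then show "ln (fact N) + (\<Sum>n<N. ln (tilt_norm r n)) = ln (fact N * (\<Prod>n<N. tilt_norm r n))"
      using tilt_norm_pos[of r] by (simp add: ln_mult prod_pos ln_prod less_imp_neq[symmetric])
  qed (use assms in auto)
qed

lemma has_real_derivative_ln_heine_deriv:
  "s\<^sub>0 < t \<Longrightarrow>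
    (ln_heine_deriv N has_real_derivative (\<Sum>n<N. hankel_form.ln_norm_deriv2 (tilt_form 0 t) n)) (at t)"
  unfolding ln_heine_deriv_def by (intro DERIV_sum has_real_derivative_tilt_form_2_OP_div_norm)

lemma prod_tilt_form_permutes:
  assumes "s\<^sub>0 \<le> s" and p: "p permutes {0..<N}" and q: "q permutes {0..<N}"
  shows "(\<Prod>j<N. tilt_form 0 s (tilt_OP s (p j)) (tilt_OP s (q j))) = (if p = q then \<Prod>n<N. tilt_norm s n else 0)"
proof (cases "p = q")
  case True
  have "(\<Prod>j<N. tilt_norm s (p j)) = (\<Prod>n<N. tilt_norm s n)"
    using prod.permute[OF p, of "tilt_norm s"] by (simp add: comp_def atLeast0LessThan)
  with True show ?thesis by (simp add: tilt_norm_eq)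
next
  case False
  interpret hankel_form "tilt_form 0 s" using assms(1) by (rule hankel_form_tilt_form)
  obtain j where j: "p j \<noteq> q j" using False by auto
  then have "j < N" using permutes_not_in[OF p] permutes_not_in[OF q] by fastforce
  moreover have "tilt_form 0 s (tilt_OP s (p j)) (tilt_OP s (q j)) = 0"
    unfolding tilt_OP_def using j OP_orthogonal B_sym by (metis linorder_neqE_nat)
  ultimately show ?thesis using False by (auto intro: prod_zero)
qed

text \<open>Heine's formula: expanding the squared Vandermonde determinant in the basis of the
  orthogonal polynomials, only the diagonal terms survive integration.\<close>
lemma heine_identity:
  assumes "s\<^sub>0 \<le> s"
  shows "(\<integral>z. (\<Prod>j<N. \<Prod>k\<in>{Suc j..<N}. (z j - z k)\<^sup>2) * (\<Prod>j<N. tilt_weight s (z j))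
      \<partial>PiM {..<N} (\<lambda>_. lborel)) = fact N * (\<Prod>n<N. tilt_norm s n)"
proof -
  interpret product_sigma_finite "\<lambda>_::nat. lborel :: real measure"
    unfolding product_sigma_finite_def by (simp add: sigma_finite_lborel)
  define S where "S = {p. p permutes {0..<N}}"
  define g where "g p q j x = poly (tilt_OP s (p j)) x * poly (tilt_OP s (q j)) x * tilt_weight s x"
    for p q :: "nat \<Rightarrow> nat" and j x
  have g: "integrable lborel (g p q j)" "integral\<^sup>L lborel (g p q j) = tilt_form 0 s (tilt_OP s (p j)) (tilt_OP s (q j))"
    for p q j
    unfolding g_def tilt_form_def using integrable_tilt_form[OF assms, of 0] by simp_all
  have int: "integrable (PiM {..<N} (\<lambda>_. lborel)) (\<lambda>z. \<Prod>j\<in>{..<N}. g p q j (z j))" for p q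
    by (rule product_integrable_prod) (auto simp: g)
  have integral: "(\<integral>z. (\<Prod>j\<in>{..<N}. g p q j (z j)) \<partial>PiM {..<N} (\<lambda>_. lborel))
      = (\<Prod>j<N. tilt_form 0 s (tilt_OP s (p j)) (tilt_OP s (q j)))" for p q
    by (subst product_integral_prod) (auto simp: g)
  have "(\<Prod>j<N. \<Prod>k\<in>{Suc j..<N}. (z j - z k)\<^sup>2) * (\<Prod>j<N. tilt_weight s (z j))
      = (\<Sum>p\<in>S. \<Sum>q\<in>S. of_int (sign p * sign q) * (\<Prod>j<N. g p q j (z j)))" for z
    unfolding vandermonde_sq_eq_sum_permutes[OF coeff_stieltjes_OP_self[of "tilt_form 0 s"]
        stieltjes_OP_coeffs[of "tilt_form 0 s", THEN conjunct2]]
      g_def S_def tilt_OP_def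
    by (simp add: sum_distrib_right prod.distrib mult.assoc)
  then have "(\<integral>z. (\<Prod>j<N. \<Prod>k\<in>{Suc j..<N}. (z j - z k)\<^sup>2) * (\<Prod>j<N. tilt_weight s (z j))
      \<partial>PiM {..<N} (\<lambda>_. lborel))
      = (\<Sum>p\<in>S. \<Sum>q\<in>S. of_int (sign p * sign q) * (\<Prod>j<N. tilt_form 0 s (tilt_OP s (p j)) (tilt_OP s (q j))))"
    using int by (simp add: integral integrable_mult_right)
  also have "\<dots> = (\<Sum>p\<in>S. \<Sum>q\<in>S. if p = q then \<Prod>n<N. tilt_norm s n else 0)"
    using prod_tilt_form_permutes[OF assms] unfolding S_def
    by (intro sum.cong refl) (auto simp: sign_def)
  also have "\<dots> = fact N * (\<Prod>n<N. tilt_norm s n)"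
    using card_permutations[of "{0..<N}" N] finite_permutations[of "{0..<N}"] unfolding S_def by simp
  finally show ?thesis .
qed

lemma is_monic_OP_tilt_OP:
  assumes "s\<^sub>0 \<le> s"
  shows "is_monic_OP (tilt_weight s) n (tilt_OP s n)"
  unfolding is_monic_OP_def
proof (intro conjI allI impI)
  interpret hankel_form "tilt_form 0 s" using assms by (rule hankel_form_tilt_form)
  fix k assume "k < n"
  have eq: "poly (tilt_OP s n) x * x ^ k * tilt_weight s x = poly (tilt_OP s n * monom 1 k) x * tilt_weight s x" for x
    by (simp add: poly_monom)
  show "integrable lborel (\<lambda>x. poly (tilt_OP s n) x * x ^ k * tilt_weight s x)"
    unfolding eq by (rule integrable_poly_tilt[OF assms])
  have "(\<integral>x. poly (tilt_OP s n) x * x ^ k * tilt_weight s x \<partial>lborel) = tilt_form 0 s (tilt_OP s n) (monom 1 k)"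
    unfolding tilt_form_def by (simp add: poly_monom mult_ac)
  also have "\<dots> = 0"
    unfolding tilt_OP_def using \<open>k < n\<close> by (intro B_OP_deg_lt) (auto simp: deg_lt_def coeff_monom)
  finally show "(\<integral>x. poly (tilt_OP s n) x * x ^ k * tilt_weight s x \<partial>lborel) = 0" .
qed (simp_all add: tilt_OP_def coeff_stieltjes_OP_self degree_stieltjes_OP)

lemma is_monic_OP_tilt_weight_imp_eq:
  assumes "s\<^sub>0 \<le> s" and p: "is_monic_OP (tilt_weight s) n p"
  shows "p = tilt_OP s n"
proof -
  interpret hankel_form "tilt_form 0 s" using assms(1) by (rule hankel_form_tilt_form)
  have moments: "integrable lborel (\<lambda>x. poly p x * x ^ k * tilt_weight s x)"
      "(\<integral>x. poly p x * x ^ k * tilt_weight s x \<partial>lborel) = 0" if "k < n" for k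
    using p that unfolding is_monic_OP_def by auto
  have orth: "tilt_form 0 s p q = 0" if "deg_lt q n" for q
  proof -
    have "tilt_form 0 s p q = (\<integral>x. (\<Sum>k<n. coeff q k * (poly p x * x ^ k * tilt_weight s x)) \<partial>lborel)"
      unfolding tilt_form_def poly_eq_sum_deg_lt[OF that]
      by (simp add: sum_distrib_left sum_distrib_right algebra_simps)
    also have "\<dots> = 0" using moments by simp
    finally show ?thesis .
  qed
  have "deg_lt (p - tilt_OP s n) n"
    using p stieltjes_OP_coeffs[of "tilt_form 0 s" n] unfolding is_monic_OP_def tilt_OP_def
    by (intro deg_lt_diff) (auto simp: deg_lt_def coeff_eq_0)
  then have "tilt_form 0 s (p - tilt_OP s n) (p - tilt_OP s n) = 0"
    using orth B_OP_deg_lt unfolding tilt_OP_def by (simp add: B_diff)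
  then have "p - tilt_OP s n = 0" using B_pos by (metis less_irrefl)
  then show ?thesis by simp
qed

lemma mOP_tilt_weight: "s\<^sub>0 \<le> s \<Longrightarrow> mOP (tilt_weight s) n = tilt_OP s n"
  unfolding mOP_def using is_monic_OP_tilt_OP is_monic_OP_tilt_weight_imp_eq by blast

lemma hnorm_tilt_weight: "s\<^sub>0 \<le> s \<Longrightarrow> hnorm (tilt_weight s) n = tilt_norm s n"
  unfolding hnorm_def tilt_norm_eq tilt_form_def by (simp add: mOP_tilt_weight power2_eq_square)

lemma rc_gamma_tilt_weight:
  "s\<^sub>0 \<le> s \<Longrightarrow> (rc_gamma (tilt_weight s) n)\<^sup>2 = op_gamma_sq (tilt_form 0 s) n"
  using tilt_norm_pos[of s n] tilt_norm_pos[of s "n - 1"]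
  by (simp add: rc_gamma_def op_gamma_sq_def hnorm_tilt_weight tilt_norm_def)

lemma rc_beta_tilt_weight:
  assumes "s\<^sub>0 \<le> s"
  shows "rc_beta (tilt_weight s) n = op_beta (tilt_form 0 s) n"
  unfolding rc_beta_def mOP_tilt_weight[OF assms] tilt_OP_def
proof (rule the_equality)
  interpret hankel_form "tilt_form 0 s" using assms by (rule hankel_form_tilt_form)
  show "\<exists>c. [:0, 1:] * P n = P (Suc n) + Polynomial.smult (b n) (P n)
      + Polynomial.smult c (if n = 0 then 0 else P (n - 1))"
    using x_times_OP[of n] by (auto simp: mult_pCons_left)
  fix \<beta> assume "\<exists>c. [:0, 1:] * P n = P (Suc n) + Polynomial.smult \<beta> (P n)
      + Polynomial.smult c (if n = 0 then 0 else P (n - 1))"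
  then obtain c where "pCons 0 (P n) = P (Suc n) + Polynomial.smult \<beta> (P n)
      + Polynomial.smult c (if n = 0 then 0 else P (n - 1))"
    by (auto simp: mult_pCons_left)
  moreover have "tilt_form 0 s (if n = 0 then 0 else P (n - 1)) (P n) = 0"
    using B_deg_lt_OP[of "P (n - 1)" n] by (simp add: deg_lt_stieltjes_OP_iff)
  ultimately have "tilt_form 0 s (pCons 0 (P n)) (P n) = \<beta> * h n"
    using OP_orthogonal[of n "Suc n"] B_sym[of "P n" "P (Suc n)"] by (simp add: B_add B_smult op_norm_def)
  then show "\<beta> = b n" using B_x_OP_OP[of n] op_norm_pos[of n] by simp
qed

end

lemma Vpot_upd_2:
  assumes "d \<ge> 1"
  shows "Vpot d (u(2 := a)) x = Vpot d (u(2 := 0)) x + a * x\<^sup>2"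
proof -
  have "2 \<in> {1..2*d}" using assms by auto
  then show ?thesis unfolding Vpot_def by (simp add: sum.remove[of _ 2])
qed

lemma opweight_upd_2:
  "d \<ge> 1 \<Longrightarrow> opweight d N (u(2 := a)) x = opweight d N (u(2 := 0)) x * exp (- (real N * a) * x\<^sup>2)"
  unfolding opweight_def using Vpot_upd_2[of d u a x] by (simp add: algebra_simps flip: exp_add)

lemma Vpot_ge_half_leading:
  assumes "d \<ge> 1" and "\<bar>x\<bar> \<ge> 1" and "(\<Sum>j\<in>{1..<2*d}. \<bar>u j\<bar>) \<le> u (2*d) / 2 * \<bar>x\<bar>"
  shows "u (2*d) / 2 * x ^ (2*d) \<le> Vpot d u x"
proof -
  have "\<bar>\<Sum>j\<in>{1..<2*d}. u j * x ^ j\<bar> \<le> (\<Sum>j\<in>{1..<2*d}. \<bar>u j\<bar> * \<bar>x\<bar> ^ (2*d - 1))"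
  proof (rule order.trans[OF sum_abs sum_mono])
    fix j assume "j \<in> {1..<2*d}"
    then have "\<bar>x\<bar> ^ j \<le> \<bar>x\<bar> ^ (2*d - 1)" using assms(2) by (intro power_increasing) auto
    then show "\<bar>u j * x ^ j\<bar> \<le> \<bar>u j\<bar> * \<bar>x\<bar> ^ (2*d - 1)"
      by (simp add: abs_mult power_abs mult_left_mono)
  qed
  also have "\<dots> = (\<Sum>j\<in>{1..<2*d}. \<bar>u j\<bar>) * \<bar>x\<bar> ^ (2*d - 1)"
    by (simp add: sum_distrib_right)
  also have "\<dots> \<le> u (2*d) / 2 * \<bar>x\<bar> * \<bar>x\<bar> ^ (2*d - 1)"
    by (rule mult_right_mono[OF assms(3)]) simp
  also have "\<dots> = u (2*d) / 2 * x ^ (2*d)"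
    using assms(1) by (simp add: power_even_abs flip: power_Suc)
  finally have "\<bar>\<Sum>j\<in>{1..<2*d}. u j * x ^ j\<bar> \<le> u (2*d) / 2 * x ^ (2*d)" .
  moreover have "Vpot d u x = u (2*d) * x ^ (2*d) + (\<Sum>j\<in>{1..<2*d}. u j * x ^ j)"
  proof -
    have "{1..2*d} = insert (2*d) {1..<2*d}" using assms(1) by auto
    then show ?thesis unfolding Vpot_def by simp
  qed
  ultimately show ?thesis by linarith
qed

lemma Vpot_quadratic_lower_bound:
  assumes "d \<ge> 1" and "u (2*d) > 0"
  obtains \<alpha> C where "\<alpha> > 0" and "\<And>x. \<alpha> * x\<^sup>2 - C \<le> Vpot d u x"
proof
  define \<alpha> where "\<alpha> = u (2*d) / 2"
  define R where "R = max 1 ((\<Sum>j\<in>{1..<2*d}. \<bar>u j\<bar>) / \<alpha>)"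
  show "\<alpha> > 0" using assms(2) by (simp add: \<alpha>_def)
  fix x
  show "\<alpha> * x\<^sup>2 - ((\<Sum>j\<in>{1..2*d}. \<bar>u j\<bar> * R ^ j) + \<alpha> * R\<^sup>2) \<le> Vpot d u x"
  proof (cases "\<bar>x\<bar> \<ge> R")
    case True
    then have "(\<Sum>j\<in>{1..<2*d}. \<bar>u j\<bar>) \<le> \<alpha> * \<bar>x\<bar>" and "\<bar>x\<bar> \<ge> 1"
      using \<open>\<alpha> > 0\<close> unfolding R_def by (auto simp: field_simps)
    then have "\<alpha> * x ^ (2*d) \<le> Vpot d u x" using Vpot_ge_half_leading[OF assms(1)] by (simp add: \<alpha>_def)
    moreover have "x\<^sup>2 \<le> x ^ (2*d)"
      using \<open>\<bar>x\<bar> \<ge> 1\<close> assms(1) power_increasing[of 2 "2*d" "\<bar>x\<bar>"] by (simp add: power_even_abs)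
    moreover have "0 \<le> (\<Sum>j\<in>{1..2*d}. \<bar>u j\<bar> * R ^ j) + \<alpha> * R\<^sup>2"
      using \<open>\<alpha> > 0\<close> unfolding R_def by (intro add_nonneg_nonneg sum_nonneg) auto
    ultimately show ?thesis using \<open>\<alpha> > 0\<close> mult_left_mono[of "x\<^sup>2" "x ^ (2*d)" \<alpha>] by linarith
  next
    case False
    have "\<bar>Vpot d u x\<bar> \<le> (\<Sum>j\<in>{1..2*d}. \<bar>u j\<bar> * R ^ j)"
      unfolding Vpot_def using False
      by (intro order.trans[OF sum_abs sum_mono]) (auto simp: abs_mult power_abs intro!: mult_left_mono power_mono)
    moreover have "x\<^sup>2 \<le> R\<^sup>2" using power_mono[of "\<bar>x\<bar>" R 2] False by simp
    then have "\<alpha> * x\<^sup>2 \<le> \<alpha> * R\<^sup>2" using \<open>\<alpha> > 0\<close> by (intro mult_left_mono) auto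
    ultimately show ?thesis by linarith
  qed
qed

lemma integrable_abs_power_gauss:
  assumes "a > 0"
  shows "integrable lborel (\<lambda>x::real. \<bar>x\<bar> ^ k * exp (- a * x\<^sup>2))"
proof -
  define \<sigma> where "\<sigma> = sqrt (1 / (2 * a))"
  have \<sigma>: "\<sigma> > 0" "\<sigma>\<^sup>2 = 1 / (2 * a)" unfolding \<sigma>_def using assms by simp_all
  have eq: "sqrt (2 * pi * \<sigma>\<^sup>2) * (normal_density 0 \<sigma> x * \<bar>x - 0\<bar> ^ k) = \<bar>x\<bar> ^ k * exp (- a * x\<^sup>2)" for x
    unfolding normal_density_def using \<sigma> assms by (simp add: field_simps)
  show ?thesis
    using integrable_mult_right[OF integrable_normal_moment_abs[OF \<sigma>(1), of 0 k],
        where c = "sqrt (2 * pi * \<sigma>\<^sup>2)"]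
    unfolding eq .
qed

lemma borel_measurable_Vpot [measurable]: "(\<lambda>x. Vpot d u x) \<in> borel_measurable borel"
  unfolding Vpot_def by measurable

lemma integrable_abs_power_exp_Vpot:
  assumes "d \<ge> 1" and "u (2*d) > 0" and "c > 0"
  shows "integrable lborel (\<lambda>x. \<bar>x\<bar> ^ k * exp (- c * Vpot d u x))"
proof -
  obtain \<alpha> C where "\<alpha> > 0" and bound: "\<And>x. \<alpha> * x\<^sup>2 - C \<le> Vpot d u x"
    using Vpot_quadratic_lower_bound[where d = d and u = u, OF assms(1,2)] by blast
  have "exp (- c * Vpot d u x) \<le> exp (c * C) * exp (- (c * \<alpha>) * x\<^sup>2)" for x
    using mult_left_mono[OF bound[of x], of c] assms(3) by (simp add: algebra_simps flip: exp_add)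
  then have bound': "AE x in lborel. norm (\<bar>x\<bar> ^ k * exp (- c * Vpot d u x))
      \<le> norm (exp (c * C) * (\<bar>x\<bar> ^ k * exp (- (c * \<alpha>) * x\<^sup>2)))"
    by (intro AE_I2) (simp add: abs_mult mult_left_mono mult.left_commute)
  have "integrable lborel (\<lambda>x. exp (c * C) * (\<bar>x\<bar> ^ k * exp (- (c * \<alpha>) * x\<^sup>2)))"
    using integrable_abs_power_gauss[of "c * \<alpha>" k] \<open>\<alpha> > 0\<close> assms(3) by (intro integrable_mult_right) simp
  moreover have "(\<lambda>x. \<bar>x\<bar> ^ k * exp (- c * Vpot d u x)) \<in> borel_measurable lborel" by measurable
  ultimately show ?thesis using bound' by (rule Bochner_Integration.integrable_bound)
qed

lemma gaussian_tilt_opweight: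
  assumes "d \<ge> 1" and "N \<ge> 1" and "u (2*d) > 0"
  shows "gaussian_tilt (opweight d N (u(2 := 0))) (real N * u 2)"
proof
  show "opweight d N (u(2 := 0)) x > 0" for x by (simp add: opweight_def)
  show "opweight d N (u(2 := 0)) \<in> borel_measurable borel" unfolding opweight_def by measurable
  have eq: "opweight d N (u(2 := 0)) x * exp (- (real N * u 2) * x\<^sup>2) = exp (- real N * Vpot d u x)" for x
    using opweight_upd_2[OF assms(1), of N u "u 2" x] by (simp add: opweight_def)
  show "integrable lborel (\<lambda>x. \<bar>x\<bar> ^ k * (opweight d N (u(2 := 0)) x * exp (- (real N * u 2) * x\<^sup>2)))" for k
    unfolding eq using assms(2)
    by (intro integrable_abs_power_exp_Vpot[where d = d and u = u, OF assms(1,3)]) simp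
qed

lemma partition_Z_eq_integral_opweight:
  "partition_Z d N u = (\<integral>z. (\<Prod>j<N. \<Prod>k\<in>{Suc j..<N}. (z j - z k)\<^sup>2) * (\<Prod>j<N. opweight d N u (z j))
     \<partial>PiM {..<N} (\<lambda>_. lborel))"
  unfolding partition_Z_def opweight_def by (simp add: sum_distrib_left exp_sum)

lemma gaussian_tilt_opweight_below:
  assumes "d \<ge> 1" and "N \<ge> 1" and "v (2*d) > 0"
  obtains s\<^sub>0 where "s\<^sub>0 < real N * v 2" and "gaussian_tilt (opweight d N (v(2 := 0))) s\<^sub>0"
proof -
  \<comment> \<open>for \<open>d = 1\<close> the quadratic coefficient is the leading one, so it has to stay positive\<close>
  obtain s\<^sub>0 where "s\<^sub>0 < real N * v 2" and leading_pos: "(v(2 := s\<^sub>0 / real N)) (2*d) > 0"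
  proof (cases "d = 1")
    case True
    then show ?thesis using that[of "real N * v 2 / 2"] assms(2,3) by simp
  next
    case False
    then show ?thesis using that[of "real N * v 2 - 1"] assms(3) by simp
  qed
  moreover have "gaussian_tilt (opweight d N (v(2 := 0))) s\<^sub>0"
    using gaussian_tilt_opweight[where u = "v(2 := s\<^sub>0 / real N)", OF assms(1,2) leading_pos] assms(2)
    by simp
  ultimately show ?thesis using that by blast
qed

theorem proposition2p2:
  fixes d N :: nat and v :: "nat \<Rightarrow> real"
  assumes "d \<ge> 1" and "N \<ge> 1" and "v (2 * d) > 0"
  defines "w \<equiv> opweight d N v"
    and "F \<equiv> (\<lambda>t::real. ln (partition_Z d N (v(2 := t / real N))))"
  shows "(\<exists>e>0. \<forall>t. \<bar>t - real N * v 2\<bar> < e \<longrightarrow> F differentiable (at t))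
     \<and> (deriv F has_real_derivative
          (rc_gamma w N)\<^sup>2 * ((rc_gamma w (N - 1))\<^sup>2 + (rc_gamma w (N + 1))\<^sup>2
            + (rc_beta w N)\<^sup>2 + 2 * rc_beta w N * rc_beta w (N - 1)
            + (rc_beta w (N - 1))\<^sup>2)) (at (real N * v 2))"
proof -
  define t\<^sub>0 where "t\<^sub>0 = real N * v 2"
  obtain s\<^sub>0 where "s\<^sub>0 < t\<^sub>0" and "gaussian_tilt (opweight d N (v(2 := 0))) s\<^sub>0"
    using gaussian_tilt_opweight_below[where d = d and N = N and v = v, OF assms(1-3)] unfolding t\<^sub>0_def by blast
  then interpret gaussian_tilt "opweight d N (v(2 := 0))" s\<^sub>0 by simp
  have weight: "opweight d N (v(2 := t / real N)) = tilt_weight t" for t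
    using opweight_upd_2[OF assms(1), of N v "t / real N"] assms(2) by (simp add: fun_eq_iff tilt_weight_def)
  have F_deriv: "(F has_real_derivative ln_heine_deriv N t) (at t)" if "s\<^sub>0 < t" for t
  proof (rule has_field_derivative_transform_within_open[OF has_real_derivative_ln_heine[OF that]])
    fix r assume "r \<in> {s\<^sub>0<..}"
    then show "ln (fact N * (\<Prod>n<N. tilt_norm r n)) = F r"
      unfolding F_def partition_Z_eq_integral_opweight weight by (simp add: heine_identity)
  qed (use that in auto)
  have "(deriv F has_real_derivative (\<Sum>n<N. hankel_form.ln_norm_deriv2 (tilt_form 0 t\<^sub>0) n)) (at t\<^sub>0)"
    using has_real_derivative_ln_heine_deriv[OF \<open>s\<^sub>0 < t\<^sub>0\<close>]
    by (rule has_field_derivative_transform_within_open[where S = "{s\<^sub>0<..}"])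
      (use \<open>s\<^sub>0 < t\<^sub>0\<close> F_deriv[THEN DERIV_imp_deriv] in auto)
  moreover have "w = tilt_weight t\<^sub>0" unfolding w_def t\<^sub>0_def weight[symmetric] using assms(2) by simp
  moreover have "\<exists>e>0. \<forall>t. \<bar>t - t\<^sub>0\<bar> < e \<longrightarrow> F differentiable (at t)"
  proof (intro exI[of _ "t\<^sub>0 - s\<^sub>0"] conjI allI impI)
    fix t assume "\<bar>t - t\<^sub>0\<bar> < t\<^sub>0 - s\<^sub>0"
    then show "F differentiable (at t)"
      using F_deriv unfolding real_differentiable_def by (auto simp: abs_less_iff)
  qed (use \<open>s\<^sub>0 < t\<^sub>0\<close> in simp)
  ultimately show ?thesis
    using hankel_form.sum_ln_norm_deriv2[OF hankel_form_tilt_form assms(2), of t\<^sub>0] \<open>s\<^sub>0 < t\<^sub>0\<close>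
    by (simp add: t\<^sub>0_def rc_gamma_tilt_weight rc_beta_tilt_weight)
qed

end
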